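(* Let $\mathfrak L_1,\dots,\mathfrak L_n,\mathfrak L$ be complete lattices and $(\mathcal F_\alpha)_{\alpha\in\mathcal O}$ with $\mathcal F_\alpha:\mathfrak L_1\times\dots\times\mathfrak L_n\to(\mathfrak L\to^+\mathfrak L)$ a family which is $\liminf$-pullable in all arguments. Then (1) for every $\beta\in\mathcal O$, the family $\vec{\mathcal G}\mapsto\mu^\beta(\mathcal F_\alpha(\vec{\mathcal G}))$ $(\alpha\in\mathcal O)$ is $\liminf$-pullable; (2) for every monotone $f:\mathfrak L\to\mathfrak L$, every $\phi:\mathcal O\to\mathcal O$ and every nonzero limit ordinal $\lambda\in\mathcal O$, writing $\mu^\alpha$ for $\mu^\alpha f$: $\mu^{\liminf_\lambda\phi}=\liminf_{\alpha\to\lambda}\mu^{\phi(\alpha)}$.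
   Context: $\mathcal O$ is the set of ordinals $\le\top_{\mathsf{ord}}$ for a fixed ordinal $\top_{\mathsf{ord}}$ ($=\beth_\omega$). For $g:\mathcal O\to\mathfrak L$ into a complete lattice and a nonzero limit $\lambda$: $\liminf_\lambda g=\liminf_{\alpha\to\lambda}g(\alpha)=\sup_{\alpha_0<\lambda}\inf_{\alpha_0\le\alpha<\lambda}g(\alpha)$, $\limsup_{\alpha\to\lambda}g(\alpha)=\inf_{\alpha_0<\lambda}\sup_{\alpha_0\le\alpha<\lambda}g(\alpha)$; on products, componentwise. $\mathfrak L\to^+\mathfrak L$ = monotone maps. For $f:\mathfrak L\to\mathfrak L$, $g\in\mathfrak L$: $f^0(g)=g$, $f^{\alpha+1}(g)=f(f^\alpha(g))$, $f^\lambda(g)=\limsup_{\alpha\to\lambda}f^\alpha(g)$; $\mu^\alpha f:=f^\alpha(\bot)$. A family $(\mathcal F_\alpha)_{\alpha\in\mathcal O}$ of maps $\mathfrak K\to\mathfrak K'$ is $\liminf$-pullable if for all $\mathcal G:\mathcal O\to\mathfrak K$ and nonzero limits $\lambda$: $\mathcal F_\gamma(\liminf_{\alpha\to\lambda}\mathcal G_\alpha)\sqsubseteq\liminf_{\alpha\to\lambda}\mathcal F_\gamma(\mathcal G_\alpha)$ for all $\gamma\in\mathcal O$, and $\mathcal F_\lambda(\liminf_{\alpha\to\lambda}\mathcal G_\alpha)\sqsubseteq\liminf_{\alpha\to\lambda}\mathcal F_\alpha(\mathcal G_\alpha)$. "$\liminf$-pullable in all arguments" means the family $(\vec{\mathcal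 G},\mathcal X)\mapsto\mathcal F_\alpha(\vec{\mathcal G})(\mathcal X)$ is $\liminf$-pullable. *)

theory Defs
  imports Main "HOL-Library.Product_Order"
begin

text \<open>The index set O of ordinals up to a top ordinal is modelled by a type
 'o of sort {wellorder, complete_lattice}: a well-order with a greatest element.\<close>

definition is_limit :: "'o::{wellorder,complete_lattice} \<Rightarrow> bool" where
  "is_limit l \<longleftrightarrow> l \<noteq> bot \<and> (\<forall>b<l. \<exists>c. b < c \<and> c < l)"

definition oliminf :: "'o::wellorder \<Rightarrow> ('o \<Rightarrow> 'a::complete_lattice) \<Rightarrow> 'a" where
  "oliminf l g = (SUP a0\<in>{..<l}. INF a\<in>{a0..<l}. g a)"

definition olimsup :: "'o::wellorder \<Rightarrow> ('o \<Rightarrow> 'a::complete_lattice) \<Rightarrow> 'a" where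
  "olimsup l g = (INF a0\<in>{..<l}. SUP a\<in>{a0..<l}. g a)"

definition titer :: "('a::complete_lattice \<Rightarrow> 'a) \<Rightarrow> 'a \<Rightarrow> 'o::{wellorder,complete_lattice} \<Rightarrow> 'a" where
  "titer f g = wfrec {(x, y). x < y}
     (\<lambda>h a. if a = bot then g
            else if is_limit a then olimsup a h
            else f (h (GREATEST b. b < a)))"

definition omu :: "'o::{wellorder,complete_lattice} \<Rightarrow> ('a::complete_lattice \<Rightarrow> 'a) \<Rightarrow> 'a" where
  "omu a f = titer f bot a"

definition liminf_pullable :: "('o::{wellorder,complete_lattice} \<Rightarrow> 'k::complete_lattice \<Rightarrow> 'k2::complete_lattice) \<Rightarrow> bool" where
  "liminf_pullable F \<longleftrightarrow>
     (\<forall>G :: 'o \<Rightarrow> 'k. \<forall>l. is_limit l \<longrightarrow>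
        (\<forall>c. F c (oliminf l G) \<le> oliminf l (\<lambda>a. F c (G a))) \<and>
        F l (oliminf l G) \<le> oliminf l (\<lambda>a. F a (G a)))"

end

theory Submission
  imports Defs
begin

text \<open>For monotone f the iterates omu \<alpha> f increase in \<alpha> and are continuous at limits, where they
  are the supremum of the earlier ones. Part (1) then follows by induction on \<beta>: at successors
  the step is pulled through the liminf by pullability and monotonicity, at limits the supremum of
  the earlier bounds is bounded by monotonicity of the iterates. For part (2), a monotone map on a
  well-order commutes with tail infima, since these are attained, and a monotone map continuous at
  limits commutes with suprema of nonempty sets, since such a supremum is a maximum or a limit
  approached by the set.\<close>

lemma ordinal_cases:
  fixes a :: "'o::{wellorder,complete_lattice}"
  obtains (zero) "a = bot" | (limit) "is_limit a" | (succ) p where "p < a" "\<And>c. p < c \<Longrightarrow> a \<le> c"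
  using not_less unfolding is_limit_def by metis

lemma Greatest_less_eq_pred:
  fixes a p :: "'o::wellorder"
  assumes "p < a" "\<And>c. p < c \<Longrightarrow> a \<le> c"
  shows "(GREATEST b. b < a) = p"
  by (rule Greatest_equality) (use assms in \<open>auto simp: not_less[symmetric]\<close>)

lemma titer_unfold:
  "titer f g (a::'o::{wellorder,complete_lattice}) =
     (if a = bot then g
      else if is_limit a then olimsup a (titer f g)
      else f (titer f g (GREATEST b. b < a)))"
proof -
  have wf: "wf {(x::'o, y). x < y}" by (rule wf)
  have "olimsup a (cut (titer f g) {(x, y). x < y} a) = olimsup a (titer f g)"
    unfolding olimsup_def cut_def by (intro INF_cong SUP_cong refl) auto
  then show ?thesis
  proof (cases a rule: ordinal_cases)
    case (succ p)
    then have "a \<noteq> bot" "\<not> is_limit a"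
      unfolding is_limit_def by (auto simp: not_less[symmetric])
    then show ?thesis unfolding titer_def
      by (subst wfrec[OF wf]) (simp add: cut_def Greatest_less_eq_pred[OF succ] succ)
  qed (subst titer_def, subst wfrec[OF wf], simp add: titer_def)+
qed

lemma omu_bot: "omu bot f = bot"
  unfolding omu_def by (subst titer_unfold) simp

lemma omu_limit:
  fixes a :: "'o::{wellorder,complete_lattice}"
  assumes "is_limit a"
  shows "omu a f = olimsup a (\<lambda>x. omu x f)"
  unfolding omu_def using assms by (subst titer_unfold) (simp add: is_limit_def)

lemma omu_succ:
  fixes a p :: "'o::{wellorder,complete_lattice}"
  assumes "p < a" "\<And>c. p < c \<Longrightarrow> a \<le> c"
  shows "omu a f = f (omu p f)"
proof -
  have "a \<noteq> bot" "\<not> is_limit a"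
    using assms unfolding is_limit_def by (auto simp: not_less[symmetric])
  then show ?thesis
    unfolding omu_def by (subst titer_unfold) (simp add: Greatest_less_eq_pred[OF assms])
qed

lemma olimsup_eq_SUP:
  fixes g :: "'o::{wellorder,complete_lattice} \<Rightarrow> 'a::complete_lattice"
  assumes l: "is_limit l" and g: "\<And>x y. x \<le> y \<Longrightarrow> y < l \<Longrightarrow> g x \<le> g y"
  shows "olimsup l g = (SUP x\<in>{..<l}. g x)"
proof -
  have tail: "(SUP x\<in>{a0..<l}. g x) = (SUP x\<in>{..<l}. g x)" if "a0 < l" for a0
  proof (rule antisym)
    show "(SUP x\<in>{..<l}. g x) \<le> (SUP x\<in>{a0..<l}. g x)"
    proof (rule SUP_least)
      fix x assume "x \<in> {..<l}"
      then have "g x \<le> g (max x a0)" "max x a0 \<in> {a0..<l}"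
        using that by (auto intro: g)
      then show "g x \<le> (SUP x\<in>{a0..<l}. g x)" by (meson SUP_upper order_trans)
    qed
  qed (rule SUP_subset_mono, auto)
  have "{..<l} \<noteq> {}" using l unfolding is_limit_def by (auto simp: bot_less)
  then show ?thesis unfolding olimsup_def by (simp add: tail)
qed

lemma omu_increasing:
  fixes a :: "'o::{wellorder,complete_lattice}"
  assumes f: "mono f"
  shows "(\<forall>b\<le>a. omu b f \<le> omu a f) \<and> omu a f \<le> f (omu a f)"
proof (induction a rule: less_induct)
  case (less a)
  show ?case
  proof (cases a rule: ordinal_cases)
    case zero
    then show ?thesis by (auto simp: omu_bot bot_unique)
  next
    case limit
    then have a: "omu a f = (SUP x\<in>{..<a}. omu x f)"
      using less by (simp add: omu_limit olimsup_eq_SUP)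
    have "omu x f \<le> f (omu a f)" if "x < a" for x
      using less[OF that] a that by (metis SUP_upper f lessThan_iff monoD order_trans)
    then have "omu a f \<le> f (omu a f)" by (subst a) (auto intro: SUP_least)
    moreover have "omu b f \<le> omu a f" if "b < a" for b
      using that a by (auto intro: SUP_upper)
    ultimately show ?thesis by (metis order.order_iff_strict order_refl)
  next
    case (succ p)
    then have a: "omu a f = f (omu p f)" by (rule omu_succ)
    have pa: "omu p f \<le> omu a f" using less succ a by auto
    have "omu b f \<le> omu a f" if "b < a" for b
      using less[OF succ(1)] pa succ that by (meson not_le order_trans)
    moreover have "omu a f \<le> f (omu a f)" using pa a f by (simp add: monoD)
    ultimately show ?thesis by (metis order.order_iff_strict order_refl)
  qed
qed

lemma mono_omu:
  assumes "mono f" shows "mono (\<lambda>a::'o::{wellorder,complete_lattice}. omu a f)"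
  using omu_increasing[OF assms] by (auto intro: monoI)

lemma omu_limit_SUP:
  fixes a :: "'o::{wellorder,complete_lattice}"
  assumes "mono f" "is_limit a"
  shows "omu a f = (SUP x\<in>{..<a}. omu x f)"
  using assms by (simp add: omu_limit olimsup_eq_SUP monoD[OF mono_omu])

lemma oliminf_mono:
  assumes "\<And>a. X a \<le> Y a" shows "oliminf l X \<le> oliminf l Y"
  unfolding oliminf_def by (intro SUP_mono' INF_mono') (use assms in auto)

text \<open>Both inequalities of pullability for the iterates are instances: \<Phi> = F c (liminf G) with
  \<Psi> a = F c (G a), and \<Phi> = F l (liminf G) with \<Psi> a = F a (G a).\<close>

lemma omu_le_oliminf:
  fixes \<Phi> :: "'l::complete_lattice \<Rightarrow> 'l" and \<Psi> :: "'o::{wellorder,complete_lattice} \<Rightarrow> 'l \<Rightarrow> 'l"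
  assumes mono_\<Phi>: "mono \<Phi>" and mono_\<Psi>: "\<And>a. mono (\<Psi> a)"
    and pull: "\<And>Y. \<Phi> (oliminf l Y) \<le> oliminf l (\<lambda>a. \<Psi> a (Y a))"
  shows "omu b \<Phi> \<le> oliminf l (\<lambda>a. omu b (\<Psi> a))"
proof (induction b rule: less_induct)
  case (less b)
  show ?case
  proof (cases b rule: ordinal_cases)
    case zero
    then show ?thesis by (simp add: omu_bot)
  next
    case limit
    have "omu x \<Phi> \<le> oliminf l (\<lambda>a. omu b (\<Psi> a))" if "x < b" for x
    proof -
      have "omu x \<Phi> \<le> oliminf l (\<lambda>a. omu x (\<Psi> a))" using less[OF that] .
      also have "\<dots> \<le> oliminf l (\<lambda>a. omu b (\<Psi> a))"
        using that by (intro oliminf_mono monoD[OF mono_omu[OF mono_\<Psi>]]) simp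
      finally show ?thesis .
    qed
    then show ?thesis by (auto simp: omu_limit_SUP[OF mono_\<Phi> limit] intro: SUP_least)
  next
    case (succ p)
    have "omu b \<Phi> = \<Phi> (omu p \<Phi>)" using succ by (rule omu_succ)
    also have "\<dots> \<le> \<Phi> (oliminf l (\<lambda>a. omu p (\<Psi> a)))"
      using less[OF succ(1)] by (rule monoD[OF mono_\<Phi>])
    also have "\<dots> \<le> oliminf l (\<lambda>a. \<Psi> a (omu p (\<Psi> a)))" by (rule pull)
    also have "\<dots> = oliminf l (\<lambda>a. omu b (\<Psi> a))" by (simp add: omu_succ[OF succ])
    finally show ?thesis .
  qed
qed

lemma liminf_pullable_omu:
  fixes F :: "'o::{wellorder,complete_lattice} \<Rightarrow> 'k::complete_lattice \<Rightarrow> 'l::complete_lattice \<Rightarrow> 'l"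
  assumes mono_F: "\<And>a G. mono (F a G)"
    and pull: "liminf_pullable (\<lambda>a (G, X). F a G X)"
  shows "liminf_pullable (\<lambda>a G. omu b (F a G))"
  unfolding liminf_pullable_def
proof (intro allI impI conjI)
  fix G :: "'o \<Rightarrow> 'k" and l c :: 'o
  assume l: "is_limit l"
  have oliminf_pair: "oliminf l (\<lambda>a. (G a, Y a)) = (oliminf l G, oliminf l Y)" for Y :: "'o \<Rightarrow> 'l"
    unfolding oliminf_def by (simp add: prod_eq_iff fst_SUP snd_SUP fst_INF snd_INF)
  note pull_pairs = pull[unfolded liminf_pullable_def, rule_format, OF l, of "\<lambda>a. (G a, Y a)" for Y,
      unfolded oliminf_pair prod.case]
  show "omu b (F c (oliminf l G)) \<le> oliminf l (\<lambda>a. omu b (F c (G a)))"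
    using pull_pairs by (intro omu_le_oliminf mono_F) blast
  show "omu b (F l (oliminf l G)) \<le> oliminf l (\<lambda>a. omu b (F a (G a)))"
    using pull_pairs by (intro omu_le_oliminf mono_F) blast
qed

lemma INF_comp_mono_wellorder:
  fixes h :: "'o::{wellorder,complete_lattice} \<Rightarrow> 'a::complete_lattice"
  assumes h: "mono h" and S: "S \<noteq> {}"
  shows "(INF x\<in>S. h (phi x)) = h (INF x\<in>S. phi x)"
proof (rule antisym)
  obtain x where "x \<in> S" "(INF x\<in>S. phi x) = phi x"
    using wellorder_InfI[of _ "phi ` S"] S by fastforce
  then show "(INF x\<in>S. h (phi x)) \<le> h (INF x\<in>S. phi x)" by (metis INF_lower)
qed (rule mono_INF[OF h])

lemma Sup_limit_continuous:
  fixes h :: "'o::{wellorder,complete_lattice} \<Rightarrow> 'a::complete_lattice"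
  assumes h: "mono h" and cont: "\<And>L. is_limit L \<Longrightarrow> h L = (SUP x\<in>{..<L}. h x)"
    and A: "A \<noteq> {}"
  shows "h (Sup A) = (SUP x\<in>A. h x)"
proof (rule antisym)
  show "h (Sup A) \<le> (SUP x\<in>A. h x)"
  proof (cases "Sup A \<in> A")
    case True
    then show ?thesis by (rule SUP_upper)
  next
    case False
    have cofinal: "\<exists>c\<in>A. b < c" if "b < Sup A" for b
      using that by (meson Sup_least not_less)
    with False have "is_limit (Sup A)"
      unfolding is_limit_def using A
      by (metis Sup_upper bot.extremum_uniqueI ex_in_conv order.not_eq_order_implies_strict)
    then have "h (Sup A) = (SUP x\<in>{..<Sup A}. h x)" by (rule cont)
    also have "\<dots> \<le> (SUP x\<in>A. h x)"
      by (rule SUP_least) (use cofinal in \<open>force intro: SUP_upper2 monoD[OF h] less_imp_le\<close>)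
    finally show ?thesis .
  qed
qed (rule mono_Sup[OF h])

lemma omu_oliminf:
  fixes f :: "'l::complete_lattice \<Rightarrow> 'l" and phi :: "'o::{wellorder,complete_lattice} \<Rightarrow> 'o"
  assumes f: "mono f" and l: "is_limit l"
  shows "omu (oliminf l phi) f = oliminf l (\<lambda>a. omu (phi a) f)"
proof -
  have "{..<l} \<noteq> {}" using l unfolding is_limit_def by (auto simp: bot_less)
  then have "omu (SUP a0\<in>{..<l}. INF a\<in>{a0..<l}. phi a) f
      = (SUP a0\<in>{..<l}. omu (INF a\<in>{a0..<l}. phi a) f)"
    by (subst Sup_limit_continuous[OF mono_omu[OF f] omu_limit_SUP[OF f]]) (simp_all add: image_image)
  also have "\<dots> = (SUP a0\<in>{..<l}. INF a\<in>{a0..<l}. omu (phi a) f)"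
    by (intro SUP_cong refl INF_comp_mono_wellorder[OF mono_omu[OF f], symmetric]) auto
  finally show ?thesis unfolding oliminf_def .
qed

theorem lemma4p17:
  fixes F :: "'o::{wellorder,complete_lattice} \<Rightarrow> 'k::complete_lattice \<Rightarrow> 'l::complete_lattice \<Rightarrow> 'l"
  assumes mono_F: "\<And>a G. mono (F a G)"
    and pull: "liminf_pullable (\<lambda>a (G, X). F a G X)"
  shows "(\<forall>b::'o. liminf_pullable (\<lambda>a G. omu b (F a G)))
    \<and> (\<forall>(f :: 'l \<Rightarrow> 'l) (phi :: 'o \<Rightarrow> 'o) l. mono f \<longrightarrow> is_limit l \<longrightarrow>
          omu (oliminf l phi) f = oliminf l (\<lambda>a. omu (phi a) f))"
  using liminf_pullable_omu[OF mono_F pull] omu_oliminf by blast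

end
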